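(* Let $(M,\mathbf g,\nabla)$ be a Riemann–Cartan spacetime admitting a spin structure, fix a spin frame determining an orthonormal frame $\{\mathbf e_{\mathbf a}\}$ with dual coframe $\{\theta^{\mathbf a}\}$ and reciprocal coframe $\theta_{\mathbf a}=\eta_{\mathbf{ab}}\theta^{\mathbf b}$. For every $\psi\in\sec\mathcal C\ell^{(0)}(M,\mathtt g)$ and all $\mathbf a,\mathbf b$, $$[\nabla^{(s)}_{\mathbf e_{\mathbf a}},\nabla^{(s)}_{\mathbf e_{\mathbf b}}]\psi=\tfrac12\mathfrak R(\theta_{\mathbf a}\wedge\theta_{\mathbf b})\,\psi-\big(T^{\mathbf c}_{\mathbf{ab}}-\omega^{\mathbf c}_{\mathbf{ab}}+\omega^{\mathbf c}_{\mathbf{ba}}\big)\nabla^{(s)}_{\mathbf e_{\mathbf c}}\psi .$$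
   Context: A Riemann–Cartan spacetime: $4$-dimensional oriented, time-oriented manifold $M$ with Lorentzian metric $\mathbf g$ of signature $(1,3)$ and linear connection $\nabla$ with $\nabla\mathbf g=0$ and nonzero torsion. $\mathcal C\ell(M,\mathtt g)$ is the Clifford bundle of differential forms ($\theta^{\mathbf a}\theta^{\mathbf b}+\theta^{\mathbf b}\theta^{\mathbf a}=2\eta^{\mathbf{ab}}$, $\eta=\mathrm{diag}(1,-1,-1,-1)$), $\mathcal C\ell^{(0)}(M,\mathtt g)$ its even subbundle; $\nabla$ extends to $\mathcal C\ell(M,\mathtt g)$ as a derivation of the Clifford product. Notation: $\nabla_{\mathbf e_{\mathbf a}}\mathbf e_{\mathbf b}=\omega^{\mathbf c}_{\mathbf{ab}}\mathbf e_{\mathbf c}$ (equivalently $\nabla_{\mathbf e_{\mathbf a}}\theta^{\mathbf b}=-\omega^{\mathbf b}_{\mathbf{ac}}\theta^{\mathbf c}$), $[\mathbf e_{\mathbf a},\mathbf e_{\mathbf b}]=c^{\mathbf c}_{\mathbf{ab}}\mathbf e_{\mathbf c}$, torsion $T^{\mathbf c}_{\mathbf{ab}}=\omega^{\mathbf c}_{\mathbf{ab}}-\omega^{\mathbf c}_{\mathbf{ba}}-c^{\mathbf c}_{\mathbf{ab}}$. For a vector field $\mathbf v$, $\omega_{\mathbf v}$ is the $2$-form-valued connection form in the gauge $\{\theta^{\mathbf a}\}$: the section of $\bigwedge^2T^*M$ such that $\nabla_{\mathbf v}A=\partial_{\mathbf v}(A)+\frac12[\omega_{\mathbf v},A]$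 for every Clifford field $A=A^I\theta_I$, where $\partial_{\mathbf v}(A)=\mathbf v(A^I)\theta_I$ (derivative of components in the basis of multiforms $\theta_I$ generated by $\{\theta^{\mathbf a}\}$) and $[\cdot,\cdot]$ is the Clifford commutator. The effective spinorial covariant derivative is $\nabla^{(s)}_{\mathbf v}\psi=\nabla_{\mathbf v}\psi+\frac12\psi\,\omega_{\mathbf v}$. The biform-valued curvature is $\mathfrak R(u\wedge v)=\nabla_{\mathbf u}\omega_{\mathbf v}-\nabla_{\mathbf v}\omega_{\mathbf u}-\frac12[\omega_{\mathbf u},\omega_{\mathbf v}]-\omega_{[\mathbf u,\mathbf v]}$, where $u=\mathbf g(\mathbf u,\cdot)$, $v=\mathbf g(\mathbf v,\cdot)$ (so $\theta_{\mathbf a}$ corresponds to $\mathbf e_{\mathbf a}$) and $\nabla_{\mathbf u}\omega_{\mathbf v}$ is the covariant derivative of the Clifford field $\omega_{\mathbf v}$. *)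

theory Defs
  imports "HOL-Analysis.Analysis"
begin

text \<open>Local (frame / chart) model of a Riemann-Cartan spacetime.
  Points of a chart domain U are in real^4; frame indices are elements of the
  type 4 (0 = timelike index).  Clifford algebra Cl(1,3) of multiforms generated
  by the coframe: elements are functions from blades (subsets of frame indices)
  to real coefficients.\<close>

type_synonym idx = 4
type_synonym pt = "real^4"
type_synonym cl = "idx set \<Rightarrow> real"

definition eta :: "idx \<Rightarrow> real" where
  "eta i = (if i = 0 then 1 else -1)"

text \<open>sign of the Clifford product of the blades theta^A and theta^B
  (orthonormal coframe, blades written with increasing indices)\<close>
definition blade_sign :: "idx set \<Rightarrow> idx set \<Rightarrow> real" where
  "blade_sign A B = (-1) ^ card {(i,j). i \<in> A \<and> j \<in> B \<and> j < i}
                    * (\<Prod>i\<in>A \<inter> B. eta i)"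

definition cmul :: "cl \<Rightarrow> cl \<Rightarrow> cl" (infixl "\<star>" 70) where
  "x \<star> y = (\<lambda>C. \<Sum>A\<in>UNIV. \<Sum>B\<in>UNIV.
              if A - B \<union> (B - A) = C then blade_sign A B * x A * y B else 0)"

definition cone :: cl where "cone = (\<lambda>A. if A = {} then 1 else 0)"

definition cadd :: "cl \<Rightarrow> cl \<Rightarrow> cl" where "cadd x y = (\<lambda>A. x A + y A)"
definition csub :: "cl \<Rightarrow> cl \<Rightarrow> cl" where "csub x y = (\<lambda>A. x A - y A)"
definition cscale :: "real \<Rightarrow> cl \<Rightarrow> cl" where "cscale r x = (\<lambda>A. r * x A)"
definition csum :: "('i \<Rightarrow> cl) \<Rightarrow> 'i set \<Rightarrow> cl" where
  "csum f S = (\<lambda>A. \<Sum>i\<in>S. f i A)"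

definition ccomm :: "cl \<Rightarrow> cl \<Rightarrow> cl" where
  "ccomm x y = csub (x \<star> y) (y \<star> x)"

text \<open>coframe 1-form theta^i and reciprocal theta_i = eta_ii theta^i\<close>
definition gen :: "idx \<Rightarrow> cl" where
  "gen i = (\<lambda>A. if A = {i} then 1 else 0)"

definition prodlist :: "cl list \<Rightarrow> cl" where
  "prodlist xs = foldr cmul xs cone"

definition is_even :: "cl \<Rightarrow> bool" where
  "is_even x \<longleftrightarrow> (\<forall>A. odd (card A) \<longrightarrow> x A = 0)"

definition is_bivector :: "cl \<Rightarrow> bool" where
  "is_bivector x \<longleftrightarrow> (\<forall>A. card A \<noteq> 2 \<longrightarrow> x A = 0)"

text \<open>The connection acting algebraically on the Clifford algebra at a point, as the
  derivation of the Clifford product determined by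
  nabla_v theta^b = - w b c theta^c  (w b c = omega^b_{vc}).\<close>
definition Dgen :: "(idx \<Rightarrow> idx \<Rightarrow> real) \<Rightarrow> idx \<Rightarrow> cl" where
  "Dgen w b = csum (\<lambda>c. cscale (- w b c) (gen c)) UNIV"

definition Dblade :: "(idx \<Rightarrow> idx \<Rightarrow> real) \<Rightarrow> idx set \<Rightarrow> cl" where
  "Dblade w A = (let L = sorted_list_of_set A in
     csum (\<lambda>j. prodlist ((map gen L)[j := Dgen w (L ! j)])) {..<length L})"

definition Dalg :: "(idx \<Rightarrow> idx \<Rightarrow> real) \<Rightarrow> cl \<Rightarrow> cl" where
  "Dalg w x = csum (\<lambda>A. cscale (x A) (Dblade w A)) UNIV"

text \<open>Vector fields are given by their frame components v a (v = v^a e_a).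
  e a : the frame vector field e_a in chart coordinates.
  om b a c : the connection coefficient omega^b_{ac}, i.e. nabla_{e_a} e_c = omega^b_{ac} e_b.\<close>

definition vder :: "(idx \<Rightarrow> pt \<Rightarrow> pt) \<Rightarrow> (idx \<Rightarrow> pt \<Rightarrow> real) \<Rightarrow> (pt \<Rightarrow> real) \<Rightarrow> pt \<Rightarrow> real" where
  "vder e v f x = (\<Sum>a\<in>UNIV. v a x * frechet_derivative f (at x) (e a x))"

definition cpartial :: "(idx \<Rightarrow> pt \<Rightarrow> pt) \<Rightarrow> (idx \<Rightarrow> pt \<Rightarrow> real) \<Rightarrow> (pt \<Rightarrow> cl) \<Rightarrow> pt \<Rightarrow> cl" where
  "cpartial e v A x = (\<lambda>I. vder e v (\<lambda>y. A y I) x)"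

definition conn_v :: "(idx \<Rightarrow> idx \<Rightarrow> idx \<Rightarrow> pt \<Rightarrow> real) \<Rightarrow> (idx \<Rightarrow> pt \<Rightarrow> real) \<Rightarrow> pt \<Rightarrow> idx \<Rightarrow> idx \<Rightarrow> real" where
  "conn_v om v x b c = (\<Sum>a\<in>UNIV. v a x * om b a c x)"

definition cnabla :: "(idx \<Rightarrow> pt \<Rightarrow> pt) \<Rightarrow> (idx \<Rightarrow> idx \<Rightarrow> idx \<Rightarrow> pt \<Rightarrow> real) \<Rightarrow> (idx \<Rightarrow> pt \<Rightarrow> real) \<Rightarrow> (pt \<Rightarrow> cl) \<Rightarrow> pt \<Rightarrow> cl" where
  "cnabla e om v A x = cadd (cpartial e v A x) (Dalg (conn_v om v x) (A x))"

definition omega_v :: "(idx \<Rightarrow> idx \<Rightarrow> idx \<Rightarrow> pt \<Rightarrow> real) \<Rightarrow> (idx \<Rightarrow> pt \<Rightarrow> real) \<Rightarrow> pt \<Rightarrow> cl" where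
  "omega_v om v x = (THE B. is_bivector B \<and>
      (\<forall>y. Dalg (conn_v om v x) y = cscale (1/2) (ccomm B y)))"

definition snabla :: "(idx \<Rightarrow> pt \<Rightarrow> pt) \<Rightarrow> (idx \<Rightarrow> idx \<Rightarrow> idx \<Rightarrow> pt \<Rightarrow> real) \<Rightarrow> (idx \<Rightarrow> pt \<Rightarrow> real) \<Rightarrow> (pt \<Rightarrow> cl) \<Rightarrow> pt \<Rightarrow> cl" where
  "snabla e om v psi x = cadd (cnabla e om v psi x) (cscale (1/2) (psi x \<star> omega_v om v x))"

text \<open>frame vector field e_a in frame components\<close>
definition fv :: "idx \<Rightarrow> idx \<Rightarrow> pt \<Rightarrow> real" where
  "fv a = (\<lambda>c x. if c = a then 1 else 0)"

text \<open>biform-valued curvature R(theta_a wedge theta_b); cc c a b = c^c_{ab}\<close>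
definition curv :: "(idx \<Rightarrow> pt \<Rightarrow> pt) \<Rightarrow> (idx \<Rightarrow> idx \<Rightarrow> idx \<Rightarrow> pt \<Rightarrow> real) \<Rightarrow> (idx \<Rightarrow> idx \<Rightarrow> idx \<Rightarrow> pt \<Rightarrow> real) \<Rightarrow> idx \<Rightarrow> idx \<Rightarrow> pt \<Rightarrow> cl" where
  "curv e om cc a b x =
     csub (csub (csub (cnabla e om (fv a) (omega_v om (fv b)) x)
                      (cnabla e om (fv b) (omega_v om (fv a)) x))
                (cscale (1/2) (ccomm (omega_v om (fv a) x) (omega_v om (fv b) x))))
          (omega_v om (\<lambda>c y. cc c a b y) x)"

definition torsion :: "(idx \<Rightarrow> idx \<Rightarrow> idx \<Rightarrow> pt \<Rightarrow> real) \<Rightarrow> (idx \<Rightarrow> idx \<Rightarrow> idx \<Rightarrow> pt \<Rightarrow> real) \<Rightarrow> idx \<Rightarrow> idx \<Rightarrow> idx \<Rightarrow> pt \<Rightarrow> real" where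
  "torsion om cc c a b x = om c a b x - om c b a x - cc c a b x"

fun Ck :: "nat \<Rightarrow> pt set \<Rightarrow> (pt \<Rightarrow> real) \<Rightarrow> bool" where
  "Ck 0 U f = continuous_on U f"
| "Ck (Suc k) U f = ((\<forall>x\<in>U. f differentiable (at x)) \<and>
                     (\<forall>i. Ck k U (\<lambda>x. frechet_derivative f (at x) (axis i 1))))"

definition smooth_on :: "pt set \<Rightarrow> (pt \<Rightarrow> real) \<Rightarrow> bool" where
  "smooth_on U f \<longleftrightarrow> (\<forall>k. Ck k U f)"

end

theory Submission
  imports Defs
begin

text \<open>In the orthonormal frame the covariant derivative acts on multiform fields as
  \<open>\<nabla>\<^sub>a A = \<partial>\<^sub>a A + 1/2 [\<omega>\<^sub>a, A]\<close>, where \<open>\<omega>\<^sub>a = 1/2 \<omega>\<^sub>p\<^sub>a\<^sub>q \<theta>\<^sup>p \<theta>\<^sup>q\<close>: metric compatibility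
  makes this a bivector whose half-commutator with \<open>\<theta>\<^sup>b\<close> is \<open>-\<omega>\<^sup>b\<^sub>a\<^sub>c \<theta>\<^sup>c\<close>, a derivation of
  the Clifford algebra is determined by its values on the generators, and no other bivector has
  this property because none commutes with all generators. Consequently the spinorial derivative
  is \<open>\<partial>\<^sub>a \<psi> + 1/2 \<omega>\<^sub>a \<psi>\<close>, a left multiplication. Expanding the commutator, the symmetry of second partial
  derivatives turns \<open>[\<partial>\<^sub>a, \<partial>\<^sub>b]\<close> into \<open>c\<^sup>c\<^sub>a\<^sub>b \<partial>\<^sub>c\<close>, and the remaining terms regroup as
  \<open>1/2 (\<partial>\<^sub>a \<omega>\<^sub>b - \<partial>\<^sub>b \<omega>\<^sub>a + 1/2 [\<omega>\<^sub>a, \<omega>\<^sub>b] - c\<^sup>c\<^sub>a\<^sub>b \<omega>\<^sub>c) \<psi>\<close>, which is the curvature term;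
  finally \<open>T\<^sup>c\<^sub>a\<^sub>b - \<omega>\<^sup>c\<^sub>a\<^sub>b + \<omega>\<^sup>c\<^sub>b\<^sub>a = -c\<^sup>c\<^sub>a\<^sub>b\<close>.\<close>

section \<open>The Clifford algebra\<close>

lemma sym_diff_cancel_left [simp]: "sym_diff A (sym_diff A B) = B"
  and sym_diff_eq_iff: "sym_diff A B = C \<longleftrightarrow> B = sym_diff A C"
  by auto

lemma cmul_apply: "(x \<star> y) C = (\<Sum>A\<in>UNIV. blade_sign A (sym_diff A C) * x A * y (sym_diff A C))"
proof -
  have "(\<Sum>B\<in>UNIV. if A - B \<union> (B - A) = C then blade_sign A B * x A * y B else 0)
      = blade_sign A (sym_diff A C) * x A * y (sym_diff A C)" for A
    by (subst sum.cong[OF refl, where h = "\<lambda>B. if B = sym_diff A C then blade_sign A B * x A * y B else 0"])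
       (auto simp: sym_diff_eq_iff)
  then show ?thesis
    unfolding cmul_def by simp
qed

text \<open>The sign of a product of blades factors over pairs of indices; this reduces associativity
  of the Clifford product to a cocycle identity for each pair, checked by cases.\<close>

definition blade_sign_factor :: "idx set \<Rightarrow> idx set \<Rightarrow> idx \<Rightarrow> idx \<Rightarrow> real" where
  "blade_sign_factor A B i j =
     (if i \<in> A \<and> j \<in> B \<and> j < i then -1 else 1) * (if i = j \<and> i \<in> A \<and> i \<in> B then eta i else 1)"

lemma blade_sign_eq_prod: "blade_sign A B = (\<Prod>i\<in>UNIV. \<Prod>j\<in>UNIV. blade_sign_factor A B i j)"
proof -
  let ?S = "{(i, j). i \<in> A \<and> j \<in> B \<and> j < i}"
  have "(\<Prod>i\<in>UNIV. \<Prod>j\<in>UNIV. if i \<in> A \<and> j \<in> B \<and> j < i then -1 else 1)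
      = (\<Prod>p\<in>UNIV. if p \<in> ?S then -1 else (1::real))"
    by (simp add: prod.cartesian_product case_prod_beta)
  also have "\<dots> = (-1) ^ card ?S"
    by (simp add: prod.If_cases)
  finally have sign: "(-1) ^ card ?S
      = (\<Prod>i\<in>UNIV. \<Prod>j\<in>UNIV. if i \<in> A \<and> j \<in> B \<and> j < i then -1 else (1::real))" ..
  have "(\<Prod>j\<in>UNIV. if i = j \<and> i \<in> A \<and> i \<in> B then eta i else 1)
      = (\<Prod>j\<in>UNIV. if j = i then (if i \<in> A \<inter> B then eta i else 1) else 1)" for i
    by (rule prod.cong) auto
  then have metric: "(\<Prod>i\<in>A \<inter> B. eta i)
      = (\<Prod>i\<in>UNIV. \<Prod>j\<in>UNIV. if i = j \<and> i \<in> A \<and> i \<in> B then eta i else 1)"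
    using prod.inter_restrict[of UNIV eta "A \<inter> B"] by (simp add: prod.delta)
  show ?thesis
    unfolding blade_sign_def blade_sign_factor_def sign metric prod.distrib ..
qed

lemma blade_sign_cocycle:
  "blade_sign A B * blade_sign (sym_diff A B) C = blade_sign A (sym_diff B C) * blade_sign B C"
proof -
  have "blade_sign_factor A B i j * blade_sign_factor (sym_diff A B) C i j
      = blade_sign_factor A (sym_diff B C) i j * blade_sign_factor B C i j" for i j
    unfolding blade_sign_factor_def
    by (cases "i \<in> A"; cases "i \<in> B"; cases "i \<in> C"; cases "j \<in> A"; cases "j \<in> B";
        cases "j \<in> C"; cases "j < i"; cases "i = j"; simp)
  then show ?thesis
    unfolding blade_sign_eq_prod prod.distrib[symmetric] by simp
qed

lemma cmul_assoc: "(x \<star> y) \<star> z = x \<star> (y \<star> z)"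
proof
  fix D
  have "((x \<star> y) \<star> z) D = (\<Sum>A\<in>UNIV. \<Sum>E\<in>UNIV. blade_sign E (sym_diff E D) *
      (blade_sign A (sym_diff A E) * x A * y (sym_diff A E)) * z (sym_diff E D))"
    unfolding cmul_apply by (subst sum.swap) (simp add: sum_distrib_left sum_distrib_right)
  also have "\<dots> = (\<Sum>A\<in>UNIV. \<Sum>B\<in>UNIV. blade_sign (sym_diff A B) (sym_diff (sym_diff A B) D) *
      (blade_sign A B * x A * y B) * z (sym_diff (sym_diff A B) D))"
  proof (rule sum.cong[OF refl])
    fix A
    show "(\<Sum>E\<in>UNIV. blade_sign E (sym_diff E D) *
        (blade_sign A (sym_diff A E) * x A * y (sym_diff A E)) * z (sym_diff E D))
      = (\<Sum>B\<in>UNIV. blade_sign (sym_diff A B) (sym_diff (sym_diff A B) D) *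
        (blade_sign A B * x A * y B) * z (sym_diff (sym_diff A B) D))"
      by (rule sum.reindex_bij_witness[of _ "sym_diff A" "sym_diff A"]) auto
  qed
  also have "\<dots> = (\<Sum>A\<in>UNIV. \<Sum>B\<in>UNIV. blade_sign A (sym_diff A D) *
      blade_sign B (sym_diff B (sym_diff A D)) * x A * y B * z (sym_diff B (sym_diff A D)))"
  proof (intro sum.cong refl)
    fix A B
    have "sym_diff (sym_diff A B) D = sym_diff B (sym_diff A D)"
      by auto
    moreover have "blade_sign A B * blade_sign (sym_diff A B) (sym_diff B (sym_diff A D))
        = blade_sign A (sym_diff A D) * blade_sign B (sym_diff B (sym_diff A D))"
      using blade_sign_cocycle[of A B "sym_diff B (sym_diff A D)"] by simp
    ultimately show "blade_sign (sym_diff A B) (sym_diff (sym_diff A B) D) *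
        (blade_sign A B * x A * y B) * z (sym_diff (sym_diff A B) D)
      = blade_sign A (sym_diff A D) * blade_sign B (sym_diff B (sym_diff A D)) * x A * y B *
        z (sym_diff B (sym_diff A D))"
      by (simp add: ac_simps)
  qed
  also have "\<dots> = (x \<star> (y \<star> z)) D"
    unfolding cmul_apply by (simp add: sum_distrib_left sum_distrib_right ac_simps)
  finally show "((x \<star> y) \<star> z) D = (x \<star> (y \<star> z)) D" .
qed

lemma cmul_cone_left [simp]: "cone \<star> x = x"
proof
  fix C
  have "(cone \<star> x) C = (\<Sum>A\<in>UNIV. if A = {} then blade_sign A (sym_diff A C) * x (sym_diff A C) else 0)"
    unfolding cmul_apply cone_def by (rule sum.cong) auto
  then show "(cone \<star> x) C = x C"
    by (simp add: sum.delta' blade_sign_def)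
qed

lemma cmul_cone_right [simp]: "x \<star> cone = x"
proof
  fix C
  have "(x \<star> cone) C = (\<Sum>A\<in>UNIV. if A = C then blade_sign A (sym_diff A C) * x A else 0)"
    unfolding cmul_apply cone_def by (rule sum.cong) auto
  then show "(x \<star> cone) C = x C"
    by (simp add: sum.delta' blade_sign_def)
qed

lemma cmul_cadd_left: "cadd x y \<star> z = cadd (x \<star> z) (y \<star> z)"
  and cmul_cadd_right: "z \<star> cadd x y = cadd (z \<star> x) (z \<star> y)"
  and cmul_cscale_left: "cscale r x \<star> z = cscale r (x \<star> z)"
  and cmul_cscale_right: "z \<star> cscale r x = cscale r (z \<star> x)"
  by (rule ext; simp add: cadd_def cscale_def cmul_apply algebra_simps sum.distrib sum_distrib_left)+

text \<open>A type copy of \<open>cl\<close>, so that the Clifford operations form an instance of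
  \<open>real_algebra_1\<close> and computations can be done with the generic algebra of that class.\<close>

typedef clifford = "UNIV :: cl set"
  morphisms coeffs Cl by simp

instantiation clifford :: real_algebra_1
begin

definition "0 = Cl (\<lambda>_. 0)"
definition "1 = Cl cone"
definition "a + b = Cl (cadd (coeffs a) (coeffs b))"
definition "a - b = Cl (csub (coeffs a) (coeffs b))"
definition "- a = Cl (\<lambda>A. - coeffs a A)"
definition "a * b = Cl (coeffs a \<star> coeffs b)"
definition "scaleR r a = Cl (cscale r (coeffs a))"

instance
proof
  fix a b c :: clifford and r s :: real
  have eq: "\<And>x y. x = y \<longleftrightarrow> coeffs x = coeffs y"
    by (simp add: coeffs_inject)
  note defs = zero_clifford_def one_clifford_def plus_clifford_def minus_clifford_def
    uminus_clifford_def times_clifford_def scaleR_clifford_def Cl_inverse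
  show "a + b + c = a + (b + c)" "a + b = b + a" "0 + a = a" "- a + a = 0" "a - b = a + - b"
    "r *\<^sub>R (a + b) = r *\<^sub>R a + r *\<^sub>R b" "(r + s) *\<^sub>R a = r *\<^sub>R a + s *\<^sub>R a"
    "r *\<^sub>R s *\<^sub>R a = (r * s) *\<^sub>R a" "1 *\<^sub>R a = a"
    unfolding eq by (auto simp: defs cadd_def csub_def cscale_def algebra_simps)
  show "a * b * c = a * (b * c)" "1 * a = a" "a * 1 = a"
    "(a + b) * c = a * c + b * c" "a * (b + c) = a * b + a * c"
    "r *\<^sub>R a * b = r *\<^sub>R (a * b)" "a * r *\<^sub>R b = r *\<^sub>R (a * b)"
    unfolding eq by (simp_all add: defs cmul_assoc cmul_cadd_left cmul_cadd_right
        cmul_cscale_left cmul_cscale_right)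
  show "(0::clifford) \<noteq> 1"
    unfolding eq by (simp add: defs fun_eq_iff cone_def)
qed

end

lemma Cl_eq_iff: "Cl x = Cl y \<longleftrightarrow> x = y"
  by (simp add: Cl_inject)

lemma Cl_hom:
  "Cl (cadd x y) = Cl x + Cl y"
  "Cl (csub x y) = Cl x - Cl y"
  "Cl (x \<star> y) = Cl x * Cl y"
  "Cl (cscale r x) = r *\<^sub>R Cl x"
  "Cl cone = 1"
  "Cl (ccomm x y) = Cl x * Cl y - Cl y * Cl x"
  by (simp_all add: plus_clifford_def minus_clifford_def times_clifford_def scaleR_clifford_def
      one_clifford_def ccomm_def Cl_inverse)

lemma Cl_csum: "finite S \<Longrightarrow> Cl (csum f S) = (\<Sum>i\<in>S. Cl (f i))"
proof (induction S rule: finite_induct)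
  case empty
  then show ?case
    by (simp add: csum_def zero_clifford_def)
next
  case (insert i S)
  then have "csum f (insert i S) = cadd (f i) (csum f S)"
    by (simp add: csum_def cadd_def fun_eq_iff)
  with insert show ?case
    by (simp add: Cl_hom)
qed

lemma eta_times_eta [simp]: "eta i * eta i = 1"
  and eta_nonzero [simp]: "eta i \<noteq> 0"
  by (simp_all add: eta_def)

lemma blade_sign_singletons:
  "blade_sign {a} {b} = (if b < a then -1 else 1) * (if a = b then eta a else 1)"
proof -
  have "{(i, j). i \<in> {a} \<and> j \<in> {b} \<and> j < i} = (if b < a then {(a, b)} else {})"
    by auto
  then show ?thesis
    unfolding blade_sign_def by auto
qed

lemma gen_cmul_apply: "(gen r \<star> x) C = blade_sign {r} (sym_diff {r} C) * x (sym_diff {r} C)"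
  and cmul_gen_apply: "(x \<star> gen r) C = blade_sign (sym_diff {r} C) {r} * x (sym_diff {r} C)"
proof -
  have "(gen r \<star> x) C = (\<Sum>A\<in>UNIV. if A = {r} then blade_sign A (sym_diff A C) * x (sym_diff A C) else 0)"
    unfolding cmul_apply by (rule sum.cong) (auto simp: gen_def)
  then show "(gen r \<star> x) C = blade_sign {r} (sym_diff {r} C) * x (sym_diff {r} C)"
    by (simp add: sum.delta')
  have "(x \<star> gen r) C = (\<Sum>A\<in>UNIV. if A = sym_diff {r} C then blade_sign A (sym_diff A C) * x A else 0)"
    unfolding cmul_apply by (rule sum.cong) (auto simp: gen_def)
  then show "(x \<star> gen r) C = blade_sign (sym_diff {r} C) {r} * x (sym_diff {r} C)"
    by (simp add: sum.delta' Un_commute)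
qed

definition theta :: "idx \<Rightarrow> clifford" where
  "theta i = Cl (gen i)"

definition two_eta :: "idx \<Rightarrow> idx \<Rightarrow> real" where
  "two_eta a b = (if a = b then 2 * eta a else 0)"

lemma theta_anticommute: "theta a * theta b + theta b * theta a = two_eta a b *\<^sub>R 1"
proof -
  have gen_gen: "gen a \<star> gen b = (\<lambda>C. if C = sym_diff {a} {b} then blade_sign {a} {b} else 0)"
    for a b
  proof
    fix C
    have "sym_diff {a} C = {b} \<longleftrightarrow> C = sym_diff {a} {b}"
      by auto
    then show "(gen a \<star> gen b) C = (if C = sym_diff {a} {b} then blade_sign {a} {b} else 0)"
      unfolding gen_cmul_apply by (auto simp: gen_def)
  qed
  have "(if b < a then -1 else 1) + (if a < b then -1 else 1) = (0::real)" if "a \<noteq> b"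
    using that by (auto simp: not_less_iff_gr_or_eq)
  then have "cadd (gen a \<star> gen b) (gen b \<star> gen a) = cscale (two_eta a b) cone"
    by (auto simp: gen_gen blade_sign_singletons two_eta_def cadd_def cscale_def cone_def
        fun_eq_iff insert_commute)
  then show ?thesis
    by (simp add: theta_def flip: Cl_hom)
qed

lemma theta_theta_commutator:
  "theta p * theta q * theta r - theta r * (theta p * theta q)
     = two_eta q r *\<^sub>R theta p - two_eta p r *\<^sub>R theta q"
proof -
  have qr: "theta q * theta r = two_eta q r *\<^sub>R 1 - theta r * theta q"
    and pr: "theta p * theta r = two_eta p r *\<^sub>R 1 - theta r * theta p"
    using theta_anticommute[of q r] theta_anticommute[of p r] by (simp_all add: eq_diff_eq)
  have "theta p * theta q * theta r = two_eta q r *\<^sub>R theta p - (theta p * theta r) * theta q"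
    by (simp add: mult.assoc qr algebra_simps)
  also have "\<dots> = two_eta q r *\<^sub>R theta p - two_eta p r *\<^sub>R theta q + theta r * (theta p * theta q)"
    by (simp add: pr algebra_simps)
  finally show ?thesis
    by simp
qed

section \<open>The connection bivector\<close>

definition metric_compatible :: "(idx \<Rightarrow> idx \<Rightarrow> real) \<Rightarrow> bool" where
  "metric_compatible w \<longleftrightarrow> (\<forall>b c. eta b * w b c = - (eta c * w c b))"

text \<open>With \<open>w b c = \<omega>\<^sup>b\<^sub>v\<^sub>c\<close>, this is \<open>\<omega>\<^sub>v = 1/2 \<omega>\<^sub>p\<^sub>v\<^sub>q \<theta>\<^sup>p \<theta>\<^sup>q\<close>, the index \<open>p\<close>
  being lowered by \<open>\<eta>\<^sub>p\<^sub>p\<close>.\<close>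

definition conn_bivector :: "(idx \<Rightarrow> idx \<Rightarrow> real) \<Rightarrow> cl" where
  "conn_bivector w = csum (\<lambda>p. csum (\<lambda>q. cscale (eta p * w p q / 2) (gen p \<star> gen q)) UNIV) UNIV"

lemma Cl_conn_bivector:
  "Cl (conn_bivector w) = (\<Sum>p\<in>UNIV. \<Sum>q\<in>UNIV. (eta p * w p q / 2) *\<^sub>R (theta p * theta q))"
  by (simp add: conn_bivector_def Cl_csum Cl_hom theta_def)

lemma Cl_Dgen: "Cl (Dgen w r) = (\<Sum>c\<in>UNIV. (- w r c) *\<^sub>R theta c)"
  by (simp add: Dgen_def Cl_csum Cl_hom theta_def)

definition half_commutator :: "clifford \<Rightarrow> clifford \<Rightarrow> clifford" where
  "half_commutator B y = (1/2) *\<^sub>R (B * y - y * B)"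

lemma half_commutator_mult:
  "half_commutator B (x * y) = half_commutator B x * y + x * half_commutator B y"
  unfolding half_commutator_def by (simp add: algebra_simps)

lemma half_commutator_sum:
  "half_commutator B (\<Sum>i\<in>S. c i *\<^sub>R x i) = (\<Sum>i\<in>S. c i *\<^sub>R half_commutator B (x i))"
  unfolding half_commutator_def
  by (simp add: sum_distrib_left sum_distrib_right scaleR_sum_right sum_subtractf[symmetric]
      algebra_simps)

lemma conn_bivector_theta_commutator:
  "Cl (conn_bivector w) * theta r - theta r * Cl (conn_bivector w)
     = (\<Sum>c\<in>UNIV. (eta r * (eta c * w c r - eta r * w r c)) *\<^sub>R theta c)"
proof -
  let ?k = "\<lambda>p q. eta p * w p q / 2"
  have "Cl (conn_bivector w) * theta r - theta r * Cl (conn_bivector w)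
      = (\<Sum>p\<in>UNIV. \<Sum>q\<in>UNIV. ?k p q *\<^sub>R (theta p * theta q * theta r - theta r * (theta p * theta q)))"
    unfolding Cl_conn_bivector
    by (simp add: sum_distrib_left sum_distrib_right sum_subtractf[symmetric] scaleR_diff_right)
  also have "\<dots> = (\<Sum>p\<in>UNIV. \<Sum>q\<in>UNIV. ?k p q *\<^sub>R (two_eta q r *\<^sub>R theta p))
                  - (\<Sum>p\<in>UNIV. \<Sum>q\<in>UNIV. ?k p q *\<^sub>R (two_eta p r *\<^sub>R theta q))"
    unfolding theta_theta_commutator by (simp add: sum_subtractf[symmetric] scaleR_diff_right)
  also have "\<dots> = (\<Sum>c\<in>UNIV. (?k c r * (2 * eta r)) *\<^sub>R theta c)
                  - (\<Sum>c\<in>UNIV. (?k r c * (2 * eta r)) *\<^sub>R theta c)"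
  proof -
    have "(\<Sum>q\<in>UNIV. ?k p q *\<^sub>R (two_eta q r *\<^sub>R theta p)) = (?k p r * (2 * eta r)) *\<^sub>R theta p"
      for p
      by (subst sum.cong[OF refl, where h = "\<lambda>q. if q = r then (?k p r * (2 * eta r)) *\<^sub>R theta p else 0"])
         (auto simp: two_eta_def)
    moreover have "(\<Sum>q\<in>UNIV. ?k p q *\<^sub>R (two_eta p r *\<^sub>R theta q))
        = (if p = r then (\<Sum>c\<in>UNIV. (?k r c * (2 * eta r)) *\<^sub>R theta c) else 0)" for p
      by (auto simp: two_eta_def)
    ultimately show ?thesis
      by (simp add: sum.delta)
  qed
  also have "\<dots> = (\<Sum>c\<in>UNIV. (?k c r * (2 * eta r) - ?k r c * (2 * eta r)) *\<^sub>R theta c)"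
    by (simp only: sum_subtractf[symmetric] scaleR_diff_left[symmetric])
  finally show ?thesis
    by (simp add: mult.commute mult.left_commute right_diff_distrib)
qed

lemma half_commutator_conn_bivector_theta:
  assumes "metric_compatible w"
  shows "half_commutator (Cl (conn_bivector w)) (theta r) = Cl (Dgen w r)"
proof -
  have "eta r * (eta c * w c r - eta r * w r c) = - 2 * w r c" for c
  proof -
    have "eta c * w c r = - (eta r * w r c)"
      using assms unfolding metric_compatible_def by blast
    then show ?thesis
      by (simp add: algebra_simps)
  qed
  then show ?thesis
    unfolding half_commutator_def conn_bivector_theta_commutator Cl_Dgen
    by (simp add: scaleR_sum_right)
qed

definition blade :: "idx set \<Rightarrow> cl" where
  "blade A = (\<lambda>C. if C = A then 1 else 0)"

lemma Cl_eq_sum_blades: "Cl y = (\<Sum>A\<in>UNIV. y A *\<^sub>R Cl (blade A))"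
proof -
  have "y = csum (\<lambda>A. cscale (y A) (blade A)) UNIV"
    by (simp add: csum_def cscale_def blade_def fun_eq_iff if_distrib sum.delta' cong: if_cong)
  then have "Cl y = Cl (csum (\<lambda>A. cscale (y A) (blade A)) UNIV)"
    by (rule arg_cong)
  then show ?thesis
    by (simp add: Cl_csum Cl_hom)
qed

lemma gen_cmul_blade:
  assumes "\<forall>j\<in>S. l < j"
  shows "gen l \<star> blade S = blade (insert l S)"
proof
  fix C
  have "l \<notin> S"
    using assms by auto
  have no_inversions: "{(i, j). i \<in> {l} \<and> j \<in> S \<and> j < i} = {}"
    using assms by auto
  have "blade_sign {l} S = 1"
    unfolding blade_sign_def no_inversions using \<open>l \<notin> S\<close> by simp
  moreover have "sym_diff {l} C = S \<longleftrightarrow> C = insert l S"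
    using \<open>l \<notin> S\<close> by blast
  ultimately show "(gen l \<star> blade S) C = blade (insert l S) C"
    unfolding gen_cmul_apply blade_def by (cases "C = insert l S") simp_all
qed

lemma prodlist_Nil [simp]: "prodlist [] = cone"
  and prodlist_Cons [simp]: "prodlist (x # xs) = x \<star> prodlist xs"
  by (simp_all add: prodlist_def)

lemma prodlist_sorted_gen: "sorted_wrt (<) L \<Longrightarrow> prodlist (map gen L) = blade (set L)"
proof (induction L)
  case Nil
  then show ?case
    by (simp add: blade_def cone_def fun_eq_iff)
next
  case Cons
  then show ?case
    by (simp add: gen_cmul_blade)
qed

lemma Cl_prodlist_update:
  assumes "\<And>l. Cl (D l) = half_commutator B (theta l)"
  shows "Cl (csum (\<lambda>j. prodlist ((map gen L)[j := D (L ! j)])) {..<length L})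
         = half_commutator B (Cl (prodlist (map gen L)))"
proof (induction L)
  case Nil
  then show ?case
    by (simp add: Cl_csum Cl_hom half_commutator_def)
next
  case (Cons l L)
  have "Cl (csum (\<lambda>j. prodlist ((map gen (l # L))[j := D ((l # L) ! j)])) {..<length (l # L)})
      = (\<Sum>j<Suc (length L). Cl (prodlist ((map gen (l # L))[j := D ((l # L) ! j)])))"
    by (simp add: Cl_csum)
  also have "\<dots> = Cl (D l) * Cl (prodlist (map gen L))
        + theta l * (\<Sum>j<length L. Cl (prodlist ((map gen L)[j := D (L ! j)])))"
    unfolding sum.lessThan_Suc_shift by (simp add: Cl_hom theta_def sum_distrib_left)
  also have "\<dots> = half_commutator B (theta l) * Cl (prodlist (map gen L))
      + theta l * half_commutator B (Cl (prodlist (map gen L)))"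
    using Cons by (simp add: assms Cl_csum)
  also have "\<dots> = half_commutator B (Cl (prodlist (map gen (l # L))))"
    by (simp add: half_commutator_mult Cl_hom theta_def)
  finally show ?case .
qed

text \<open>A derivation of the Clifford algebra is determined by its values on the generators.\<close>

lemma Cl_Dalg_eq_half_commutator:
  assumes "\<And>l. Cl (Dgen w l) = half_commutator B (theta l)"
  shows "Cl (Dalg w y) = half_commutator B (Cl y)"
proof -
  have "Cl (Dblade w A) = half_commutator B (Cl (blade A))" for A
    using Cl_prodlist_update[OF assms, of "sorted_list_of_set A"]
      prodlist_sorted_gen[of "sorted_list_of_set A"]
    by (simp add: Dblade_def Let_def)
  then have "Cl (Dalg w y) = (\<Sum>A\<in>UNIV. y A *\<^sub>R half_commutator B (Cl (blade A)))"
    by (simp add: Dalg_def Cl_csum Cl_hom)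
  also have "\<dots> = half_commutator B (Cl y)"
    unfolding Cl_eq_sum_blades[of y] half_commutator_sum ..
  finally show ?thesis .
qed

lemma Dalg_conn_bivector:
  assumes "metric_compatible w"
  shows "Dalg w y = cscale (1/2) (ccomm (conn_bivector w) y)"
proof -
  have "Cl (Dalg w y) = half_commutator (Cl (conn_bivector w)) (Cl y)"
    by (rule Cl_Dalg_eq_half_commutator) (simp add: half_commutator_conn_bivector_theta[OF assms])
  then show ?thesis
    unfolding Cl_eq_iff[symmetric] by (simp add: half_commutator_def Cl_hom)
qed

lemma conn_bivector_is_bivector:
  assumes "metric_compatible w"
  shows "is_bivector (conn_bivector w)"
  unfolding is_bivector_def
proof (intro allI impI)
  fix A :: "idx set"
  assume "card A \<noteq> 2"
  have "w p p = 0" for p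
  proof -
    have "eta p * w p p = - (eta p * w p p)"
      using assms unfolding metric_compatible_def by blast
    then show ?thesis
      by simp
  qed
  moreover have "(gen p \<star> gen q) A = 0" if "p \<noteq> q" for p q
  proof -
    have "sym_diff {p} A \<noteq> {q}"
    proof
      assume singleton: "sym_diff {p} A = {q}"
      have "A = sym_diff {p} (sym_diff {p} A)"
        by (rule sym_diff_cancel_left[symmetric])
      also have "\<dots> = {p, q}"
        using that by (simp only: singleton) auto
      finally show False
        using \<open>card A \<noteq> 2\<close> that by simp
    qed
    then show ?thesis
      unfolding gen_cmul_apply by (simp add: gen_def)
  qed
  ultimately have term_zero: "eta p * w p q / 2 * (gen p \<star> gen q) A = 0" for p q
    by (cases "p = q") simp_all
  have "conn_bivector w A = (\<Sum>p\<in>UNIV. \<Sum>q\<in>UNIV. eta p * w p q / 2 * (gen p \<star> gen q) A)"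
    by (simp add: conn_bivector_def csum_def cscale_def)
  also have "\<dots> = 0"
    by (simp only: term_zero sum.neutral_const)
  finally show "conn_bivector w A = 0" .
qed

text \<open>If \<open>p \<noteq> r\<close> then \<open>\<theta>\<^sup>r\<close> anticommutes with \<open>\<theta>\<^sup>p \<theta>\<^sup>r\<close>, so a bivector commuting with
  every generator has no \<open>{p, r}\<close> component.\<close>

lemma bivector_central_eq_zero:
  assumes "is_bivector D" and "\<And>r. D \<star> gen r = gen r \<star> D"
  shows "D = (\<lambda>_. 0)"
proof
  fix X :: "idx set"
  show "D X = 0"
  proof (cases "card X = 2")
    case False
    then show ?thesis
      using assms(1) unfolding is_bivector_def by blast
  next
    case True
    then obtain p r where "p \<noteq> r" and X: "X = {p, r}"
      by (auto simp: card_2_iff)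
    have "(D \<star> gen r) (sym_diff {r} X) = (gen r \<star> D) (sym_diff {r} X)"
      using assms(2) by simp
    then have eq: "blade_sign X {r} * D X = blade_sign {r} X * D X"
      unfolding gen_cmul_apply cmul_gen_apply by simp
    have "{(i, j). i \<in> X \<and> j \<in> {r} \<and> j < i} = (if r < p then {(p, r)} else {})"
      and "{(i, j). i \<in> {r} \<and> j \<in> X \<and> j < i} = (if p < r then {(r, p)} else {})"
      and "X \<inter> {r} = {r}" and "{r} \<inter> X = {r}"
      using \<open>p \<noteq> r\<close> X by auto
    then have "blade_sign X {r} = (if r < p then -1 else 1) * eta r"
      and "blade_sign {r} X = (if p < r then -1 else 1) * eta r"
      unfolding blade_sign_def by auto
    then have "blade_sign X {r} \<noteq> blade_sign {r} X"
      using \<open>p \<noteq> r\<close> eta_nonzero[of r] by (cases "p < r") (auto simp: not_less_iff_gr_or_eq)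
    with eq show ?thesis
      by simp
  qed
qed

lemma the_conn_bivector:
  assumes "metric_compatible w"
  shows "(THE B. is_bivector B \<and> (\<forall>y. Dalg w y = cscale (1/2) (ccomm B y))) = conn_bivector w"
proof (rule the_equality)
  show "is_bivector (conn_bivector w) \<and> (\<forall>y. Dalg w y = cscale (1/2) (ccomm (conn_bivector w) y))"
    using conn_bivector_is_bivector[OF assms] Dalg_conn_bivector[OF assms] by blast
next
  fix B
  assume B: "is_bivector B \<and> (\<forall>y. Dalg w y = cscale (1/2) (ccomm B y))"
  let ?D = "csub B (conn_bivector w)"
  have "is_bivector ?D"
    using B conn_bivector_is_bivector[OF assms] unfolding is_bivector_def csub_def by simp
  moreover have "?D \<star> gen r = gen r \<star> ?D" for r
  proof -
    have "cscale (1/2) (ccomm B (gen r)) = cscale (1/2) (ccomm (conn_bivector w) (gen r))"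
      using B Dalg_conn_bivector[OF assms, of "gen r"] by simp
    then have "Cl B * theta r - theta r * Cl B
        = Cl (conn_bivector w) * theta r - theta r * Cl (conn_bivector w)"
      unfolding Cl_eq_iff[symmetric] by (simp add: Cl_hom theta_def)
    then have "(Cl B - Cl (conn_bivector w)) * theta r = theta r * (Cl B - Cl (conn_bivector w))"
      by (simp add: algebra_simps)
    then show ?thesis
      by (simp add: theta_def flip: Cl_eq_iff Cl_hom)
  qed
  ultimately have "?D = (\<lambda>_. 0)"
    by (rule bivector_central_eq_zero)
  then show "B = conn_bivector w"
    by (simp add: csub_def fun_eq_iff)
qed

section \<open>Symmetry of second derivatives\<close>

definition partial :: "'n \<Rightarrow> (real^'n \<Rightarrow> real) \<Rightarrow> real^'n \<Rightarrow> real" where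
  "partial i f y = frechet_derivative f (at y) (axis i 1)"

lemma smooth_on_differentiable: "smooth_on U f \<Longrightarrow> x \<in> U \<Longrightarrow> f differentiable (at x)"
  unfolding smooth_on_def using Ck.simps(2)[of 0 U f] by blast

lemma smooth_on_partial: "smooth_on U f \<Longrightarrow> smooth_on U (partial i f)"
  unfolding smooth_on_def partial_def[abs_def] using Ck.simps(2) by blast

lemma smooth_on_continuous: "smooth_on U f \<Longrightarrow> continuous_on U f"
  unfolding smooth_on_def using Ck.simps(1) by blast

lemma sum_axis_eq: "(\<Sum>j\<in>UNIV. (h $ j) *\<^sub>R axis j 1) = (h :: real^'n)"
  using basis_expansion[of h] by (simp add: scalar_mult_eq_scaleR)

lemma frechet_derivative_eq_sum_partial:
  fixes f :: "real^'n \<Rightarrow> real"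
  assumes "f differentiable (at y)"
  shows "frechet_derivative f (at y) h = (\<Sum>j\<in>UNIV. h $ j * partial j f y)"
proof -
  have lin: "linear (frechet_derivative f (at y))"
    using assms frechet_derivative_works has_derivative_linear by blast
  have "frechet_derivative f (at y) h = frechet_derivative f (at y) (\<Sum>j\<in>UNIV. (h $ j) *\<^sub>R axis j 1)"
    by (simp add: sum_axis_eq)
  also have "\<dots> = (\<Sum>j\<in>UNIV. h $ j * partial j f y)"
    by (simp add: linear_sum[OF lin] linear_cmul[OF lin] partial_def)
  finally show ?thesis .
qed

lemma frechet_derivative_vec_nth:
  fixes F :: "'a::real_normed_vector \<Rightarrow> real^'n"
  assumes "\<And>j. (\<lambda>y. F y $ j) differentiable (at x)"
  shows "frechet_derivative F (at x) h $ j = frechet_derivative (\<lambda>y. F y $ j) (at x) h"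
proof -
  let ?F' = "\<lambda>h. \<Sum>j\<in>UNIV. frechet_derivative (\<lambda>y. F y $ j) (at x) h *\<^sub>R axis j 1"
  have "((\<lambda>y. \<Sum>j\<in>UNIV. (F y $ j) *\<^sub>R axis j 1) has_derivative ?F') (at x)"
    by (intro has_derivative_sum has_derivative_scaleR_left frechet_derivative_works[THEN iffD1] assms)
  then have "(F has_derivative ?F') (at x)"
    by (rule has_derivative_transform[rotated 2]) (simp_all add: sum_axis_eq)
  then have "frechet_derivative F (at x) = ?F'"
    by (rule frechet_derivative_at[symmetric])
  then show ?thesis
    by (simp add: sum_component axis_def if_distrib cong: if_cong)
qed

lemma has_real_derivative_along_line:
  fixes f :: "'a::real_normed_vector \<Rightarrow> real"
  assumes "f differentiable (at (p + s *\<^sub>R u))"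
  shows "((\<lambda>s. f (p + s *\<^sub>R u)) has_real_derivative frechet_derivative f (at (p + s *\<^sub>R u)) u) (at s)"
proof -
  have line: "((\<lambda>s. p + s *\<^sub>R u) has_derivative (\<lambda>h. h *\<^sub>R u)) (at s)"
    by (auto intro!: derivative_eq_intros)
  have lin: "linear (frechet_derivative f (at (p + s *\<^sub>R u)))"
    using assms frechet_derivative_works has_derivative_linear by blast
  have "((f \<circ> (\<lambda>s. p + s *\<^sub>R u)) has_derivative
      (frechet_derivative f (at (p + s *\<^sub>R u)) \<circ> (\<lambda>h. h *\<^sub>R u))) (at s)"
    by (rule diff_chain_at[OF line]) (use assms frechet_derivative_works in blast)
  moreover have "(\<lambda>h. h * frechet_derivative f (at (p + s *\<^sub>R u)) u)
      = (*) (frechet_derivative f (at (p + s *\<^sub>R u)) u)"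
    by (simp add: fun_eq_iff mult.commute)
  ultimately show ?thesis
    unfolding has_field_derivative_def by (simp add: o_def linear_cmul[OF lin])
qed

text \<open>Mean value theorem along \<open>u\<close> for \<open>s \<mapsto> f (x + s u + t v) - f (x + s u)\<close>, then along \<open>v\<close>
  for the resulting difference of derivatives.\<close>

lemma second_difference_mean_value:
  fixes f :: "'a::real_normed_vector \<Rightarrow> real"
  assumes "t > 0" and "cball x (2 * t) \<subseteq> U" and "norm u = 1" and "norm v = 1"
    and f: "\<And>y. y \<in> U \<Longrightarrow> f differentiable (at y)"
    and Df: "\<And>y. y \<in> U \<Longrightarrow> (\<lambda>z. frechet_derivative f (at z) u) differentiable (at y)"
  obtains z where "norm (z - x) < 2 * t"
    and "f (x + t *\<^sub>R u + t *\<^sub>R v) - f (x + t *\<^sub>R u) - f (x + t *\<^sub>R v) + f x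
         = t * t * frechet_derivative (\<lambda>z. frechet_derivative f (at z) u) (at z) v"
proof -
  have small: "norm (a *\<^sub>R u + b *\<^sub>R v) \<le> a + b" if "0 \<le> a" "0 \<le> b" for a b
    using norm_triangle_ineq[of "a *\<^sub>R u" "b *\<^sub>R v"] that assms(3,4) by simp
  have in_U: "x + a *\<^sub>R u + b *\<^sub>R v \<in> U" if "0 \<le> a" "a \<le> t" "0 \<le> b" "b \<le> t" for a b
  proof -
    have "dist x (x + a *\<^sub>R u + b *\<^sub>R v) = norm (a *\<^sub>R u + b *\<^sub>R v)"
      unfolding dist_norm by (metis add.assoc minus_diff_eq norm_minus_cancel add_diff_cancel_left')
    then show ?thesis
      using small[of a b] that assms(2) by auto
  qed
  define g where "g s = f ((x + t *\<^sub>R v) + s *\<^sub>R u) - f (x + s *\<^sub>R u)" for s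
  define Dg where "Dg s = frechet_derivative f (at (x + t *\<^sub>R v + s *\<^sub>R u)) u
    - frechet_derivative f (at (x + s *\<^sub>R u)) u" for s
  have "(g has_real_derivative Dg s) (at s)" if "0 \<le> s" "s \<le> t" for s
  proof -
    have "x + t *\<^sub>R v + s *\<^sub>R u \<in> U" and "x + s *\<^sub>R u \<in> U"
      using in_U[of s t] in_U[of s 0] that \<open>t > 0\<close> by (simp_all add: add.commute add.left_commute)
    then show ?thesis
      unfolding g_def[abs_def] Dg_def by (intro DERIV_diff has_real_derivative_along_line f)
  qed
  then obtain \<sigma> where \<sigma>: "0 < \<sigma>" "\<sigma> < t" and mv1: "g t - g 0 = (t - 0) * Dg \<sigma>"
    using MVT2[OF \<open>t > 0\<close>] by blast
  define k where "k b = frechet_derivative f (at ((x + \<sigma> *\<^sub>R u) + b *\<^sub>R v)) u" for b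
  define Dk where "Dk b = frechet_derivative (\<lambda>z. frechet_derivative f (at z) u)
    (at (x + \<sigma> *\<^sub>R u + b *\<^sub>R v)) v" for b
  have "(k has_real_derivative Dk b) (at b)" if "0 \<le> b" "b \<le> t" for b
  proof -
    have "x + \<sigma> *\<^sub>R u + b *\<^sub>R v \<in> U"
      using in_U[of \<sigma> b] that \<sigma> by simp
    then show ?thesis
      unfolding k_def[abs_def] Dk_def by (intro has_real_derivative_along_line Df)
  qed
  then obtain \<tau> where \<tau>: "0 < \<tau>" "\<tau> < t" and mv2: "k t - k 0 = (t - 0) * Dk \<tau>"
    using MVT2[OF \<open>t > 0\<close>] by blast
  have swap: "x + t *\<^sub>R v + \<sigma> *\<^sub>R u = x + \<sigma> *\<^sub>R u + t *\<^sub>R v"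
    by (simp add: add.commute add.left_commute)
  have "Dg \<sigma> = k t - k 0"
    unfolding Dg_def k_def swap by simp
  moreover have "g t - g 0 = f (x + t *\<^sub>R u + t *\<^sub>R v) - f (x + t *\<^sub>R u) - f (x + t *\<^sub>R v) + f x"
    unfolding g_def by (simp add: add.commute add.left_commute)
  ultimately have "f (x + t *\<^sub>R u + t *\<^sub>R v) - f (x + t *\<^sub>R u) - f (x + t *\<^sub>R v) + f x = t * t * Dk \<tau>"
    using mv1 mv2 by simp
  moreover have "norm ((x + \<sigma> *\<^sub>R u + \<tau> *\<^sub>R v) - x) < 2 * t"
    using small[of \<sigma> \<tau>] \<sigma> \<tau> by (simp add: add.assoc)
  ultimately show ?thesis
    using that unfolding Dk_def by blast
qed

text \<open>Schwarz's theorem: both mixed partials at \<open>x\<close> are limits of the same second difference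
  quotients.\<close>

lemma partial_partial_commute:
  fixes f :: "real^'n \<Rightarrow> real"
  assumes "open U" "x \<in> U"
    and f: "\<And>y. y \<in> U \<Longrightarrow> f differentiable (at y)"
    and Di: "\<And>y. y \<in> U \<Longrightarrow> partial i f differentiable (at y)"
    and Dj: "\<And>y. y \<in> U \<Longrightarrow> partial j f differentiable (at y)"
    and "continuous_on U (partial j (partial i f))"
    and "continuous_on U (partial i (partial j f))"
  shows "partial j (partial i f) x = partial i (partial j f) x"
proof (rule ccontr)
  let ?A = "partial j (partial i f) x" and ?B = "partial i (partial j f) x"
  assume "?A \<noteq> ?B"
  define \<epsilon> where "\<epsilon> = \<bar>?A - ?B\<bar> / 2"
  have "\<epsilon> > 0"
    using \<open>?A \<noteq> ?B\<close> by (simp add: \<epsilon>_def)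
  have "isCont (partial j (partial i f)) x" and "isCont (partial i (partial j f)) x"
    using assms(1,2,6,7) continuous_on_eq_continuous_at by blast+
  then obtain d1 d2 where "d1 > 0" "d2 > 0"
    and d1: "\<And>y. dist y x < d1 \<Longrightarrow> dist (partial j (partial i f) y) ?A < \<epsilon>"
    and d2: "\<And>y. dist y x < d2 \<Longrightarrow> dist (partial i (partial j f) y) ?B < \<epsilon>"
    using \<open>\<epsilon> > 0\<close> unfolding continuous_at_eps_delta by metis
  obtain r where "r > 0" "ball x r \<subseteq> U"
    using assms(1,2) open_contains_ball by blast
  define t where "t = min r (min d1 d2) / 3"
  have "t > 0"
    using \<open>r > 0\<close> \<open>d1 > 0\<close> \<open>d2 > 0\<close> by (simp add: t_def)
  have "cball x (2 * t) \<subseteq> ball x r"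
    using \<open>t > 0\<close> \<open>r > 0\<close> unfolding t_def by (auto simp: subset_eq)
  with \<open>ball x r \<subseteq> U\<close> have sub: "cball x (2 * t) \<subseteq> U"
    by blast
  have partial_eq: "partial k g = (\<lambda>z. frechet_derivative g (at z) (axis k 1))"
    for k and g :: "real^'n \<Rightarrow> real"
    by (simp add: partial_def fun_eq_iff)
  obtain z1 where z1: "norm (z1 - x) < 2 * t"
    "f (x + t *\<^sub>R axis i 1 + t *\<^sub>R axis j 1) - f (x + t *\<^sub>R axis i 1) - f (x + t *\<^sub>R axis j 1) + f x
     = t * t * partial j (partial i f) z1"
    using second_difference_mean_value[OF \<open>t > 0\<close> sub norm_axis_1 norm_axis_1 f]
      Di unfolding partial_eq by blast
  obtain z2 where z2: "norm (z2 - x) < 2 * t"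
    "f (x + t *\<^sub>R axis j 1 + t *\<^sub>R axis i 1) - f (x + t *\<^sub>R axis j 1) - f (x + t *\<^sub>R axis i 1) + f x
     = t * t * partial i (partial j f) z2"
    using second_difference_mean_value[OF \<open>t > 0\<close> sub norm_axis_1 norm_axis_1 f]
      Dj unfolding partial_eq by blast
  have "t * t * partial j (partial i f) z1 = t * t * partial i (partial j f) z2"
    using z1(2) z2(2) by (simp add: algebra_simps)
  then have "partial j (partial i f) z1 = partial i (partial j f) z2"
    using \<open>t > 0\<close> by simp
  moreover have "dist z1 x < d1" and "dist z2 x < d2"
    using z1(1) z2(1) \<open>t > 0\<close> unfolding t_def dist_norm by linarith+
  ultimately have "\<bar>?A - ?B\<bar> < 2 * \<epsilon>"
    using d1 d2 by (fastforce simp: dist_real_def)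
  then show False
    unfolding \<epsilon>_def by simp
qed

lemma has_derivative_directional_derivative:
  fixes f :: "real^'n \<Rightarrow> real" and v :: "real^'n \<Rightarrow> real^'n"
  assumes "open U" "x \<in> U"
    and f: "\<And>y. y \<in> U \<Longrightarrow> f differentiable (at y)"
    and "\<And>j. partial j f differentiable (at x)"
    and "\<And>j. (\<lambda>y. v y $ j) differentiable (at x)"
  shows "((\<lambda>y. frechet_derivative f (at y) (v y)) has_derivative
    (\<lambda>h. \<Sum>j\<in>UNIV. v x $ j * frechet_derivative (partial j f) (at x) h
                   + frechet_derivative (\<lambda>y. v y $ j) (at x) h * partial j f x)) (at x)"
proof -
  have "((\<lambda>y. \<Sum>j\<in>UNIV. v y $ j * partial j f y) has_derivative
    (\<lambda>h. \<Sum>j\<in>UNIV. v x $ j * frechet_derivative (partial j f) (at x) h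
                   + frechet_derivative (\<lambda>y. v y $ j) (at x) h * partial j f x)) (at x)"
    by (intro has_derivative_sum has_derivative_mult frechet_derivative_works[THEN iffD1] assms)
  then show ?thesis
    by (rule has_derivative_transform_within_open[OF _ assms(1,2)])
      (simp add: frechet_derivative_eq_sum_partial[OF f])
qed

lemma directional_derivative_differentiable:
  fixes f :: "pt \<Rightarrow> real" and v :: "pt \<Rightarrow> pt"
  assumes "open U" "x \<in> U" and "\<And>j. smooth_on U (\<lambda>y. v y $ j)" and "smooth_on U f"
  shows "(\<lambda>y. frechet_derivative f (at y) (v y)) differentiable (at x)"
proof -
  have "y \<in> U \<Longrightarrow> f differentiable (at y)" for y
    using smooth_on_differentiable[OF assms(4)] .
  moreover have "partial j f differentiable (at x)" and "(\<lambda>y. v y $ j) differentiable (at x)" for j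
    using smooth_on_differentiable[OF smooth_on_partial[OF assms(4)]]
      smooth_on_differentiable[OF assms(3)] assms(2) by blast+
  ultimately show ?thesis
    using has_derivative_directional_derivative[OF assms(1,2)] differentiableI by blast
qed

text \<open>The second-order terms cancel by the symmetry of second derivatives.\<close>

lemma directional_derivative_commutator:
  fixes f :: "pt \<Rightarrow> real" and u v :: "pt \<Rightarrow> pt"
  assumes "open U" "x \<in> U"
    and u: "\<And>j. smooth_on U (\<lambda>y. u y $ j)" and v: "\<And>j. smooth_on U (\<lambda>y. v y $ j)"
    and f: "smooth_on U f"
  shows "frechet_derivative (\<lambda>y. frechet_derivative f (at y) (v y)) (at x) (u x)
       - frechet_derivative (\<lambda>y. frechet_derivative f (at y) (u y)) (at x) (v x)
       = frechet_derivative f (at x)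
           (frechet_derivative v (at x) (u x) - frechet_derivative u (at x) (v x))"
proof -
  have f_diff: "y \<in> U \<Longrightarrow> f differentiable (at y)" for y
    using smooth_on_differentiable[OF f] .
  have partial_diff: "y \<in> U \<Longrightarrow> partial j f differentiable (at y)" for j y
    using smooth_on_differentiable[OF smooth_on_partial[OF f]] .
  have u_diff: "(\<lambda>y. u y $ j) differentiable (at x)" and v_diff: "(\<lambda>y. v y $ j) differentiable (at x)"
    for j
    using smooth_on_differentiable[OF u] smooth_on_differentiable[OF v] assms(2) by blast+
  define H where "H i j = partial i (partial j f) x" for i j
  have H_sym: "H i j = H j i" for i j
    unfolding H_def
    by (intro partial_partial_commute[OF assms(1,2) f_diff partial_diff partial_diff]
        smooth_on_continuous smooth_on_partial f)
  have second: "frechet_derivative (\<lambda>y. frechet_derivative f (at y) (w y)) (at x) h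
      = (\<Sum>j\<in>UNIV. \<Sum>i\<in>UNIV. w x $ j * h $ i * H i j)
        + (\<Sum>j\<in>UNIV. frechet_derivative (\<lambda>y. w y $ j) (at x) h * partial j f x)"
    if "\<And>j. (\<lambda>y. w y $ j) differentiable (at x)" for w :: "pt \<Rightarrow> pt" and h
    using frechet_derivative_at[OF has_derivative_directional_derivative[OF assms(1,2) f_diff
          partial_diff[OF assms(2)] that], symmetric]
    by (simp add: frechet_derivative_eq_sum_partial[OF partial_diff[OF assms(2)]] H_def
        sum.distrib sum_distrib_left mult.assoc)
  have "(\<Sum>j\<in>UNIV. \<Sum>i\<in>UNIV. v x $ j * u x $ i * H i j)
      = (\<Sum>j\<in>UNIV. \<Sum>i\<in>UNIV. u x $ j * v x $ i * H i j)"
    by (subst sum.swap) (simp add: H_sym mult.commute)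
  then have "frechet_derivative (\<lambda>y. frechet_derivative f (at y) (v y)) (at x) (u x)
       - frechet_derivative (\<lambda>y. frechet_derivative f (at y) (u y)) (at x) (v x)
      = (\<Sum>j\<in>UNIV. (frechet_derivative (\<lambda>y. v y $ j) (at x) (u x)
                    - frechet_derivative (\<lambda>y. u y $ j) (at x) (v x)) * partial j f x)"
    by (simp add: second u_diff v_diff sum_subtractf left_diff_distrib)
  also have "\<dots> = frechet_derivative f (at x)
      (frechet_derivative v (at x) (u x) - frechet_derivative u (at x) (v x))"
    by (simp add: frechet_derivative_eq_sum_partial[OF f_diff[OF assms(2)]]
        frechet_derivative_vec_nth u_diff v_diff)
  finally show ?thesis .
qed

definition cderiv :: "(pt \<Rightarrow> cl) \<Rightarrow> pt \<Rightarrow> pt \<Rightarrow> cl" where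
  "cderiv F x h = (\<lambda>I. frechet_derivative (\<lambda>y. F y I) (at x) h)"

definition has_cderiv :: "(pt \<Rightarrow> cl) \<Rightarrow> (pt \<Rightarrow> cl) \<Rightarrow> pt \<Rightarrow> bool" where
  "has_cderiv F F' x \<longleftrightarrow> (\<forall>I. ((\<lambda>y. F y I) has_derivative (\<lambda>h. F' h I)) (at x))"

lemma cderiv_eq: "has_cderiv F F' x \<Longrightarrow> cderiv F x h = F' h"
  unfolding has_cderiv_def cderiv_def fun_eq_iff by (metis frechet_derivative_at)

lemma has_cderiv_cderiv: "(\<And>I. (\<lambda>y. F y I) differentiable (at x)) \<Longrightarrow> has_cderiv F (cderiv F x) x"
  unfolding has_cderiv_def cderiv_def using frechet_derivative_works by blast

lemma has_cderiv_imp_has_cderiv_cderiv: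
  assumes "has_cderiv F F' x"
  shows "has_cderiv F (cderiv F x) x"
proof -
  have "cderiv F x = F'"
    using cderiv_eq[OF assms] by (simp add: fun_eq_iff)
  with assms show ?thesis
    by simp
qed

lemma has_cderiv_cadd:
  "has_cderiv F F' x \<Longrightarrow> has_cderiv G G' x \<Longrightarrow>
    has_cderiv (\<lambda>y. cadd (F y) (G y)) (\<lambda>h. cadd (F' h) (G' h)) x"
  unfolding has_cderiv_def cadd_def by (auto intro: has_derivative_add)

lemma has_cderiv_cscale:
  "has_cderiv F F' x \<Longrightarrow> has_cderiv (\<lambda>y. cscale r (F y)) (\<lambda>h. cscale r (F' h)) x"
  unfolding has_cderiv_def cscale_def by (auto intro: has_derivative_mult_right)

lemma has_cderiv_transform_within_open:
  "has_cderiv F F' x \<Longrightarrow> open U \<Longrightarrow> x \<in> U \<Longrightarrow> (\<And>y. y \<in> U \<Longrightarrow> F y = G y) \<Longrightarrow>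
    has_cderiv G F' x"
  unfolding has_cderiv_def by (auto intro: has_derivative_transform_within_open)

lemma has_cderiv_cmul:
  assumes F: "has_cderiv F F' x" and G: "has_cderiv G G' x"
  shows "has_cderiv (\<lambda>y. F y \<star> G y) (\<lambda>h. cadd (F' h \<star> G x) (F x \<star> G' h)) x"
  unfolding has_cderiv_def
proof
  fix C
  let ?s = "\<lambda>A. blade_sign A (sym_diff A C)"
  have "((\<lambda>y. ?s A * F y A * G y (sym_diff A C)) has_derivative
      (\<lambda>h. ?s A * F' h A * G x (sym_diff A C) + ?s A * F x A * G' h (sym_diff A C))) (at x)" for A
  proof -
    have "((\<lambda>y. ?s A * (F y A * G y (sym_diff A C))) has_derivative
        (\<lambda>h. ?s A * (F x A * G' h (sym_diff A C) + F' h A * G x (sym_diff A C)))) (at x)"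
      using F G unfolding has_cderiv_def by (intro has_derivative_mult_right has_derivative_mult) auto
    then show ?thesis
      by (simp add: algebra_simps)
  qed
  then have "((\<lambda>y. \<Sum>A\<in>UNIV. ?s A * F y A * G y (sym_diff A C)) has_derivative
      (\<lambda>h. \<Sum>A\<in>UNIV. ?s A * F' h A * G x (sym_diff A C) + ?s A * F x A * G' h (sym_diff A C))) (at x)"
    by (rule has_derivative_sum)
  then show "((\<lambda>y. (F y \<star> G y) C) has_derivative (\<lambda>h. cadd (F' h \<star> G x) (F x \<star> G' h) C)) (at x)"
    unfolding cmul_apply cadd_def by (simp add: sum.distrib)
qed

lemma has_cderiv_conn_bivector:
  assumes "\<And>p q. W p q differentiable (at x)"
  shows "has_cderiv (\<lambda>y. conn_bivector (\<lambda>p q. W p q y))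
    (\<lambda>h. conn_bivector (\<lambda>p q. frechet_derivative (W p q) (at x) h)) x"
proof -
  have "conn_bivector w C = (\<Sum>p\<in>UNIV. \<Sum>q\<in>UNIV. eta p / 2 * (gen p \<star> gen q) C * w p q)" for w C
    unfolding conn_bivector_def csum_def cscale_def by (simp add: algebra_simps)
  then show ?thesis
    unfolding has_cderiv_def
    by (simp only:) (intro allI has_derivative_sum has_derivative_mult_right
        frechet_derivative_works[THEN iffD1] assms)
qed

text \<open>The computation behind the theorem, in an arbitrary real algebra: \<open>d\<close> stands for frame
  derivatives, \<open>B\<close> for connection bivectors and \<open>P\<close> for the spinor field.\<close>

lemma spinor_commutator_identity:
  fixes P Ba Bb dBab dBba dPa dPb ddPab ddPba :: "'a::real_algebra_1"
    and B dP :: "'i \<Rightarrow> 'a" and k :: "'i \<Rightarrow> real"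
  assumes "ddPab - ddPba = (\<Sum>c\<in>I. k c *\<^sub>R dP c)"
  shows "(ddPab + (1/2) *\<^sub>R (dBab * P + Bb * dPa) + (1/2) *\<^sub>R (Ba * (dPb + (1/2) *\<^sub>R (Bb * P))))
       - (ddPba + (1/2) *\<^sub>R (dBba * P + Ba * dPb) + (1/2) *\<^sub>R (Bb * (dPa + (1/2) *\<^sub>R (Ba * P))))
     = (1/2) *\<^sub>R ((dBab - dBba + (1/2) *\<^sub>R (Ba * Bb - Bb * Ba) - (\<Sum>c\<in>I. k c *\<^sub>R B c)) * P)
       + (\<Sum>c\<in>I. k c *\<^sub>R (dP c + (1/2) *\<^sub>R (B c * P)))"
proof -
  have "k c *\<^sub>R (dP c + (1/2) *\<^sub>R (B c * P)) = k c *\<^sub>R dP c + (1/2) *\<^sub>R ((k c *\<^sub>R B c) * P)" for c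
    by (simp add: algebra_simps)
  then have "(\<Sum>c\<in>I. k c *\<^sub>R (dP c + (1/2) *\<^sub>R (B c * P)))
      = (\<Sum>c\<in>I. k c *\<^sub>R dP c) + (1/2) *\<^sub>R ((\<Sum>c\<in>I. k c *\<^sub>R B c) * P)"
    by (simp add: sum.distrib scaleR_sum_right sum_distrib_right)
  moreover have "ddPab = ddPba + (\<Sum>c\<in>I. k c *\<^sub>R dP c)"
    using assms by (simp add: algebra_simps)
  ultimately show ?thesis
    by (simp add: algebra_simps)
qed

section \<open>Connection and curvature in an orthonormal frame\<close>

definition frame_bivector :: "(idx \<Rightarrow> idx \<Rightarrow> idx \<Rightarrow> pt \<Rightarrow> real) \<Rightarrow> idx \<Rightarrow> pt \<Rightarrow> cl" where
  "frame_bivector om a y = conn_bivector (\<lambda>p q. om p a q y)"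

lemma sum_fv_mult: "(\<Sum>c\<in>UNIV. fv a c y * g c) = (g a :: real)"
proof -
  have "(\<Sum>c\<in>UNIV. fv a c y * g c) = (\<Sum>c\<in>UNIV. if c = a then g c else 0)"
    by (rule sum.cong) (auto simp: fv_def)
  then show ?thesis
    by simp
qed

lemma conn_v_fv: "conn_v om (fv a) y = (\<lambda>p q. om p a q y)"
  by (simp add: conn_v_def sum_fv_mult fun_eq_iff)

lemma cpartial_fv: "cpartial e (fv a) F y = cderiv F y (e a y)"
  by (simp add: cpartial_def vder_def cderiv_def sum_fv_mult)

locale riemann_cartan_frame =
  fixes U :: "pt set"
    and e :: "idx \<Rightarrow> pt \<Rightarrow> pt"
    and om :: "idx \<Rightarrow> idx \<Rightarrow> idx \<Rightarrow> pt \<Rightarrow> real"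
    and cc :: "idx \<Rightarrow> idx \<Rightarrow> idx \<Rightarrow> pt \<Rightarrow> real"
  assumes U_open: "open U"
    and frame_smooth: "\<And>a j. smooth_on U (\<lambda>x. e a x $ j)"
    and om_smooth: "\<And>b a c. smooth_on U (om b a c)"
    and metric_compat: "\<And>x a b c. x \<in> U \<Longrightarrow> eta b * om b a c x = - (eta c * om c a b x)"
    and bracket: "\<And>x a b. x \<in> U \<Longrightarrow>
        frechet_derivative (e b) (at x) (e a x) - frechet_derivative (e a) (at x) (e b x)
          = (\<Sum>c\<in>UNIV. cc c a b x *\<^sub>R e c x)"
begin

lemma metric_compatible_conn_v:
  assumes "y \<in> U"
  shows "metric_compatible (conn_v om v y)"
  unfolding metric_compatible_def
proof (intro allI)
  fix b c
  have "eta b * conn_v om v y b c = (\<Sum>a\<in>UNIV. v a y * (eta b * om b a c y))"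
    unfolding conn_v_def by (simp add: sum_distrib_left algebra_simps)
  also have "\<dots> = - (\<Sum>a\<in>UNIV. v a y * (eta c * om c a b y))"
    by (simp only: metric_compat[OF assms, where b = b and c = c] mult_minus_right sum_negf)
  also have "\<dots> = - (eta c * conn_v om v y c b)"
    unfolding conn_v_def by (simp add: sum_distrib_left algebra_simps)
  finally show "eta b * conn_v om v y b c = - (eta c * conn_v om v y c b)" .
qed

lemma omega_v_eq_conn_bivector: "y \<in> U \<Longrightarrow> omega_v om v y = conn_bivector (conn_v om v y)"
  unfolding omega_v_def by (rule the_conn_bivector[OF metric_compatible_conn_v])

lemma omega_v_fv: "y \<in> U \<Longrightarrow> omega_v om (fv a) y = frame_bivector om a y"
  by (simp add: omega_v_eq_conn_bivector conn_v_fv frame_bivector_def)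

lemma Cl_omega_v:
  assumes "y \<in> U"
  shows "Cl (omega_v om v y) = (\<Sum>c\<in>UNIV. v c y *\<^sub>R Cl (frame_bivector om c y))"
proof -
  let ?t = "\<lambda>p q c. (v c y * (eta p * om p c q y / 2)) *\<^sub>R (theta p * theta q)"
  have "Cl (omega_v om v y)
      = (\<Sum>p\<in>UNIV. \<Sum>q\<in>UNIV. (eta p * (\<Sum>c\<in>UNIV. v c y * om p c q y) / 2) *\<^sub>R (theta p * theta q))"
    by (simp add: omega_v_eq_conn_bivector[OF assms] Cl_conn_bivector conn_v_def)
  also have "\<dots> = (\<Sum>p\<in>UNIV. \<Sum>q\<in>UNIV. \<Sum>c\<in>UNIV. ?t p q c)"
    by (simp add: sum_distrib_left sum_divide_distrib scaleR_sum_left algebra_simps)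
  also have "\<dots> = (\<Sum>c\<in>UNIV. \<Sum>p\<in>UNIV. \<Sum>q\<in>UNIV. ?t p q c)"
    by (simp only: sum.swap[of "\<lambda>q c. ?t _ q c"] sum.swap[of "\<lambda>p c. \<Sum>q\<in>UNIV. ?t p q c"])
  also have "\<dots> = (\<Sum>c\<in>UNIV. v c y *\<^sub>R Cl (frame_bivector om c y))"
    by (simp add: frame_bivector_def Cl_conn_bivector scaleR_sum_right)
  finally show ?thesis .
qed

lemma Cl_cnabla_fv:
  assumes "y \<in> U"
  shows "Cl (cnabla e om (fv a) F y) = Cl (cderiv F y (e a y))
     + (1/2) *\<^sub>R (Cl (frame_bivector om a y) * Cl (F y) - Cl (F y) * Cl (frame_bivector om a y))"
proof -
  have "Dalg (conn_v om (fv a) y) z = cscale (1/2) (ccomm (frame_bivector om a y) z)" for z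
    using Dalg_conn_bivector[OF metric_compatible_conn_v[OF assms, of "fv a"]]
    unfolding conn_v_fv frame_bivector_def .
  then show ?thesis
    by (simp add: cnabla_def cpartial_fv Cl_hom)
qed

text \<open>The right action of \<open>\<omega>\<close> in the spinorial derivative cancels the right half of the
  commutator in \<open>\<nabla>\<close>; nothing about the parity of \<open>F\<close> is used.\<close>

lemma snabla_fv:
  "y \<in> U \<Longrightarrow> snabla e om (fv a) F y
     = cadd (cderiv F y (e a y)) (cscale (1/2) (frame_bivector om a y \<star> F y))"
proof -
  assume "y \<in> U"
  let ?O = "Cl (frame_bivector om a y)" and ?F = "Cl (F y)"
  have "Cl (snabla e om (fv a) F y)
      = Cl (cderiv F y (e a y)) + (1/2) *\<^sub>R (?O * ?F - ?F * ?O) + (1/2) *\<^sub>R (?F * ?O)"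
    by (simp add: snabla_def Cl_hom Cl_cnabla_fv[OF \<open>y \<in> U\<close>] omega_v_fv[OF \<open>y \<in> U\<close>])
  also have "\<dots> = Cl (cderiv F y (e a y)) + (1/2) *\<^sub>R (?O * ?F)"
    by (simp add: scaleR_diff_right)
  finally show ?thesis
    by (simp add: Cl_hom flip: Cl_eq_iff)
qed

lemma has_cderiv_frame_bivector:
  assumes "x \<in> U"
  shows "has_cderiv (frame_bivector om a) (cderiv (frame_bivector om a) x) x"
proof -
  have "has_cderiv (frame_bivector om a)
      (\<lambda>h. conn_bivector (\<lambda>p q. frechet_derivative (om p a q) (at x) h)) x"
    unfolding frame_bivector_def[abs_def]
    by (rule has_cderiv_conn_bivector) (rule smooth_on_differentiable[OF om_smooth assms])
  then show ?thesis
    by (rule has_cderiv_imp_has_cderiv_cderiv)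
qed

lemma cderiv_omega_v_fv:
  assumes "x \<in> U"
  shows "cderiv (omega_v om (fv a)) x h = cderiv (frame_bivector om a) x h"
proof -
  have "has_cderiv (omega_v om (fv a)) (cderiv (frame_bivector om a) x) x"
    using has_cderiv_frame_bivector[OF assms] U_open assms
    by (rule has_cderiv_transform_within_open) (simp add: omega_v_fv)
  from cderiv_eq[OF this] show ?thesis .
qed

lemma cderiv_snabla_fv:
  assumes psi: "\<And>I. smooth_on U (\<lambda>x. psi x I)" and "x \<in> U"
  shows "cderiv (snabla e om (fv b) psi) x h
    = cadd (cderiv (\<lambda>y. cderiv psi y (e b y)) x h)
        (cscale (1/2) (cadd (cderiv (frame_bivector om b) x h \<star> psi x)
                            (frame_bivector om b x \<star> cderiv psi x h)))"
proof -
  have "has_cderiv psi (cderiv psi x) x"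
    by (rule has_cderiv_cderiv) (rule smooth_on_differentiable[OF psi \<open>x \<in> U\<close>])
  then have product: "has_cderiv (\<lambda>y. frame_bivector om b y \<star> psi y)
      (\<lambda>h. cadd (cderiv (frame_bivector om b) x h \<star> psi x) (frame_bivector om b x \<star> cderiv psi x h)) x"
    by (rule has_cderiv_cmul[OF has_cderiv_frame_bivector[OF \<open>x \<in> U\<close>]])
  have "has_cderiv (\<lambda>y. cderiv psi y (e b y)) (cderiv (\<lambda>y. cderiv psi y (e b y)) x) x"
    unfolding cderiv_def[of psi]
    by (rule has_cderiv_cderiv)
      (rule directional_derivative_differentiable[OF U_open \<open>x \<in> U\<close> frame_smooth psi])
  from has_cderiv_cadd[OF this has_cderiv_cscale[OF product]]
  have "has_cderiv (\<lambda>y. cadd (cderiv psi y (e b y)) (cscale (1/2) (frame_bivector om b y \<star> psi y)))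
      (\<lambda>h. cadd (cderiv (\<lambda>y. cderiv psi y (e b y)) x h)
        (cscale (1/2) (cadd (cderiv (frame_bivector om b) x h \<star> psi x)
                            (frame_bivector om b x \<star> cderiv psi x h)))) x" .
  then have "has_cderiv (snabla e om (fv b) psi)
      (\<lambda>h. cadd (cderiv (\<lambda>y. cderiv psi y (e b y)) x h)
        (cscale (1/2) (cadd (cderiv (frame_bivector om b) x h \<star> psi x)
                            (frame_bivector om b x \<star> cderiv psi x h)))) x"
    by (rule has_cderiv_transform_within_open[OF _ U_open \<open>x \<in> U\<close>]) (simp add: snabla_fv)
  from cderiv_eq[OF this] show ?thesis .
qed

lemma cderiv_frame_commutator:
  assumes psi: "\<And>I. smooth_on U (\<lambda>x. psi x I)" and "x \<in> U"
  shows "csub (cderiv (\<lambda>y. cderiv psi y (e b y)) x (e a x)) (cderiv (\<lambda>y. cderiv psi y (e a y)) x (e b x))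
    = csum (\<lambda>c. cscale (cc c a b x) (cderiv psi x (e c x))) UNIV"
proof
  fix I
  let ?f = "\<lambda>y. psi y I"
  have "linear (frechet_derivative ?f (at x))"
    using smooth_on_differentiable[OF psi \<open>x \<in> U\<close>] frechet_derivative_works has_derivative_linear
    by blast
  have "csub (cderiv (\<lambda>y. cderiv psi y (e b y)) x (e a x))
      (cderiv (\<lambda>y. cderiv psi y (e a y)) x (e b x)) I
    = frechet_derivative (\<lambda>y. frechet_derivative ?f (at y) (e b y)) (at x) (e a x)
      - frechet_derivative (\<lambda>y. frechet_derivative ?f (at y) (e a y)) (at x) (e b x)"
    by (simp add: csub_def cderiv_def)
  also have "\<dots> = frechet_derivative ?f (at x) (\<Sum>c\<in>UNIV. cc c a b x *\<^sub>R e c x)"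
    unfolding directional_derivative_commutator[OF U_open \<open>x \<in> U\<close> frame_smooth frame_smooth psi]
      bracket[OF \<open>x \<in> U\<close>] ..
  also have "\<dots> = (\<Sum>c\<in>UNIV. cc c a b x * frechet_derivative ?f (at x) (e c x))"
    by (simp add: linear_sum linear_cmul \<open>linear (frechet_derivative ?f (at x))\<close>)
  also have "\<dots> = csum (\<lambda>c. cscale (cc c a b x) (cderiv psi x (e c x))) UNIV I"
    by (simp add: csum_def cscale_def cderiv_def)
  finally show "csub (cderiv (\<lambda>y. cderiv psi y (e b y)) x (e a x))
      (cderiv (\<lambda>y. cderiv psi y (e a y)) x (e b x)) I
    = csum (\<lambda>c. cscale (cc c a b x) (cderiv psi x (e c x))) UNIV I" .
qed

lemma Cl_curv:
  assumes "x \<in> U"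
  shows "Cl (curv e om cc a b x)
    = Cl (cderiv (frame_bivector om b) x (e a x)) - Cl (cderiv (frame_bivector om a) x (e b x))
      + (1/2) *\<^sub>R (Cl (frame_bivector om a x) * Cl (frame_bivector om b x)
                    - Cl (frame_bivector om b x) * Cl (frame_bivector om a x))
      - (\<Sum>c\<in>UNIV. cc c a b x *\<^sub>R Cl (frame_bivector om c x))"
proof -
  have cnabla_omega: "Cl (cnabla e om (fv a) (omega_v om (fv b)) x)
      = Cl (cderiv (frame_bivector om b) x (e a x))
        + (1/2) *\<^sub>R (Cl (frame_bivector om a x) * Cl (frame_bivector om b x)
                      - Cl (frame_bivector om b x) * Cl (frame_bivector om a x))" for a b
    by (simp add: Cl_cnabla_fv[OF assms] cderiv_omega_v_fv[OF assms] omega_v_fv[OF assms])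
  have collect: "(d1 + c *\<^sub>R (X - Y)) - (d2 + c *\<^sub>R (Y - X)) - c *\<^sub>R (X - Y) - S
      = d1 - d2 + c *\<^sub>R (X - Y) - S" for d1 d2 X Y S :: clifford and c :: real
    by (simp add: algebra_simps)
  show ?thesis
    unfolding curv_def Cl_hom omega_v_fv[OF assms] Cl_omega_v[OF assms] cnabla_omega
    by (rule collect)
qed


lemma Cl_snabla_commutator:
  assumes psi: "\<And>I. smooth_on U (\<lambda>x. psi x I)" and "x \<in> U"
  shows "Cl (snabla e om (fv a) (snabla e om (fv b) psi) x)
      - Cl (snabla e om (fv b) (snabla e om (fv a) psi) x)
    = (1/2) *\<^sub>R (Cl (curv e om cc a b x) * Cl (psi x))
      + (\<Sum>c\<in>UNIV. cc c a b x *\<^sub>R Cl (snabla e om (fv c) psi x))"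
proof -
  have "Cl (cderiv (\<lambda>y. cderiv psi y (e b y)) x (e a x))
      - Cl (cderiv (\<lambda>y. cderiv psi y (e a y)) x (e b x))
      = (\<Sum>c\<in>UNIV. cc c a b x *\<^sub>R Cl (cderiv psi x (e c x)))"
    using arg_cong[OF cderiv_frame_commutator[OF psi \<open>x \<in> U\<close>, where a = a and b = b], of Cl]
    by (simp add: Cl_hom Cl_csum)
  then show ?thesis
    by (simp only: snabla_fv[OF \<open>x \<in> U\<close>] cderiv_snabla_fv[OF psi \<open>x \<in> U\<close>] Cl_hom
        Cl_curv[OF \<open>x \<in> U\<close>]) (rule spinor_commutator_identity)
qed

end

theorem mainTheorem7:
  fixes U :: "pt set"
    and e :: "idx \<Rightarrow> pt \<Rightarrow> pt"
    and om :: "idx \<Rightarrow> idx \<Rightarrow> idx \<Rightarrow> pt \<Rightarrow> real"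
    and cc :: "idx \<Rightarrow> idx \<Rightarrow> idx \<Rightarrow> pt \<Rightarrow> real"
    and psi :: "pt \<Rightarrow> cl"
  assumes U_open: "open U"
    and frame_smooth: "\<And>a j. smooth_on U (\<lambda>x. e a x $ j)"
    and frame_indep: "\<And>x. x \<in> U \<Longrightarrow> inj (\<lambda>a. e a x) \<and> independent (range (\<lambda>a. e a x))"
    and om_smooth: "\<And>b a c. smooth_on U (om b a c)"
    and metric_compat: "\<And>x a b c. x \<in> U \<Longrightarrow> eta b * om b a c x = - (eta c * om c a b x)"
    and bracket: "\<And>x a b. x \<in> U \<Longrightarrow>
        frechet_derivative (e b) (at x) (e a x) - frechet_derivative (e a) (at x) (e b x)
          = (\<Sum>c\<in>UNIV. cc c a b x *\<^sub>R e c x)"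
    and psi_smooth: "\<And>I. smooth_on U (\<lambda>x. psi x I)"
    and psi_even: "\<And>x. x \<in> U \<Longrightarrow> is_even (psi x)"
  shows "\<forall>x\<in>U. \<forall>a b.
     csub (snabla e om (fv a) (snabla e om (fv b) psi) x)
          (snabla e om (fv b) (snabla e om (fv a) psi) x)
   = csub (cscale (1/2) (curv e om cc a b x \<star> psi x))
          (csum (\<lambda>c. cscale (torsion om cc c a b x - om c a b x + om c b a x)
                             (snabla e om (fv c) psi x)) UNIV)"
proof -
  interpret riemann_cartan_frame U e om cc
    by (rule riemann_cartan_frame.intro[OF U_open frame_smooth om_smooth metric_compat bracket])
  have "torsion om cc c a b x - om c a b x + om c b a x = - cc c a b x" for c a b x
    by (simp add: torsion_def)
  then show ?thesis
    by (simp add: Cl_snabla_commutator[OF psi_smooth] Cl_hom Cl_csum sum_negf flip: Cl_eq_iff)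
qed

end
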